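(* Let $P$ be a finite poset and $f\colon\mathcal{J}(P)\to\mathbb{R}$ a real-valued statistic. Suppose that, viewing $f$ as a statistic with values in $\mathbb{R}(q)$, we have $f=c(q)+\sum_{p\in P}c_p(q)T_p^q$ for some rational functions $c(q),c_p(q)\in\mathbb{R}(q)$. Then none of $c(q)$, $c_p(q)$ has a singularity at any nonnegative real number, and for every real $z\ge0$ we have $f=c(z)+\sum_{p\in P}c_p(z)\,T_p^q|_{z}$, where $T_p^q|_z=T_p^+-zT_p^-$.
   Context: $\mathcal{J}(P)$ is the set of order ideals of $P$. For $p\in P$, $I\in\mathcal{J}(P)$: $T_p^+(I)=1$ if $p$ is a minimal element of $P\setminus I$, else $0$; $T_p^-(I)=1$ if $p$ is a maximal element of $I$, else $0$. $T_p^q\coloneqq T_p^+-qT_p^-$ is a statistic $\mathcal{J}(P)\to\mathbb{R}(q)$, where $q$ is an indeterminate and $\mathbb{R}(q)$ the field of rational functions. *)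

theory Defs
  imports Main "HOL-Computational_Algebra.Polynomial" "HOL-Computational_Algebra.Fraction_Field"
begin

text \<open>The finite poset P is a finite subset of a type with a partial order,
  carrying the induced order.\<close>

definition order_ideals :: "'a::order set \<Rightarrow> 'a set set" where
  "order_ideals P = {I. I \<subseteq> P \<and> (\<forall>x\<in>I. \<forall>y\<in>P. y \<le> x \<longrightarrow> y \<in> I)}"

definition Tplus :: "'a::order set \<Rightarrow> 'a \<Rightarrow> 'a set \<Rightarrow> real" where
  "Tplus P p I = (if p \<in> P - I \<and> \<not> (\<exists>y\<in>P - I. y < p) then 1 else 0)"

definition Tminus :: "'a::order set \<Rightarrow> 'a \<Rightarrow> 'a set \<Rightarrow> real" where
  "Tminus P p I = (if p \<in> I \<and> \<not> (\<exists>y\<in>I. p < y) then 1 else 0)"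

type_synonym ratfun = "real poly fract"

definition qvar :: ratfun where
  "qvar = Fract [:0, 1:] 1"

definition rconst :: "real \<Rightarrow> ratfun" where
  "rconst x = Fract [:x:] 1"

definition Tq :: "'a::order set \<Rightarrow> 'a \<Rightarrow> 'a set \<Rightarrow> ratfun" where
  "Tq P p I = rconst (Tplus P p I) - qvar * rconst (Tminus P p I)"

definition regular_at :: "ratfun \<Rightarrow> real \<Rightarrow> bool" where
  "regular_at c z \<longleftrightarrow> (\<exists>n d. c = Fract n d \<and> poly d z \<noteq> 0)"

definition eval_ratfun :: "ratfun \<Rightarrow> real \<Rightarrow> real" where
  "eval_ratfun c z = (THE v. \<exists>n d. c = Fract n d \<and> poly d z \<noteq> 0 \<and> v = poly n z / poly d z)"

end

theory Submission
  imports Defs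
begin

text \<open>Weight each order ideal \<open>I \<subseteq> U\<close> of a fixed ideal \<open>U\<close> by \<open>q^(|U| - |I|)\<close>. For \<open>r \<in> U\<close>,
  adding or removing \<open>r\<close> matches the ideals in which \<open>r\<close> is minimal outside with those in
  which \<open>r\<close> is maximal inside, changing the weight by one factor \<open>q\<close>; so the weighted sum of
  \<open>T_r^q\<close> vanishes. Summing the expansion of \<open>f\<close> with these weights therefore sees only \<open>c\<close>
  and the \<open>c_r\<close> with \<open>r \<notin> U\<close>. Taking \<open>U = P\<close> expresses \<open>c\<close> times a polynomial as a
  polynomial; taking for \<open>U\<close> the largest ideal avoiding \<open>p\<close>, only \<open>c_p\<close> survives besides \<open>c\<close>,
  multiplied by the weighted sum of \<open>T_p^+\<close>. Both multipliers have nonnegative coefficients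
  and contain the term \<open>1\<close> from \<open>I = U\<close>, so they are at least \<open>1\<close> at every \<open>z \<ge> 0\<close>.
  Hence \<open>c\<close> and \<open>c_p\<close> are regular there, and evaluation at \<open>z\<close>, being a ring homomorphism
  on the functions regular at \<open>z\<close>, turns the expansion into the claimed identity.\<close>

lemma eval_ratfun_Fract:
  assumes "poly d z \<noteq> 0"
  shows "eval_ratfun (Fract n d) z = poly n z / poly d z"
  unfolding eval_ratfun_def
proof (rule the_equality)
  fix v
  assume "\<exists>n' d'. Fract n d = Fract n' d' \<and> poly d' z \<noteq> 0 \<and> v = poly n' z / poly d' z"
  then obtain n' d' where eq: "Fract n d = Fract n' d'" and d': "poly d' z \<noteq> 0"
    and v: "v = poly n' z / poly d' z"
    by blast
  from assms d' have "d \<noteq> 0" "d' \<noteq> 0" by auto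
  with eq have "n * d' = n' * d" by (simp add: eq_fract)
  then have "poly n z * poly d' z = poly n' z * poly d z" by (metis poly_mult)
  with assms d' v show "v = poly n z / poly d z" by (simp add: frac_eq_eq)
qed (use assms in blast)

lemma regular_atE:
  assumes "regular_at c z"
  obtains n d where "c = Fract n d" "poly d z \<noteq> 0"
  using assms unfolding regular_at_def by blast

lemma regular_at_Fract: "poly d z \<noteq> 0 \<Longrightarrow> regular_at (Fract n d) z"
  unfolding regular_at_def by blast

lemma rconst_0 [simp]: "rconst 0 = 0"
  by (simp add: rconst_def Zero_fract_def)

lemma rconst_1 [simp]: "rconst 1 = 1"
  by (simp add: rconst_def One_fract_def one_pCons)

lemma regular_at_rconst: "regular_at (rconst x) z"
  unfolding rconst_def by (rule regular_at_Fract) simp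

lemma eval_ratfun_rconst [simp]: "eval_ratfun (rconst x) z = x"
  unfolding rconst_def by (simp add: eval_ratfun_Fract)

lemma regular_at_0: "regular_at 0 z"
  and regular_at_1: "regular_at 1 z"
  by (metis rconst_0 rconst_1 regular_at_rconst)+

lemma eval_ratfun_0 [simp]: "eval_ratfun 0 z = 0"
  and eval_ratfun_1 [simp]: "eval_ratfun 1 z = 1"
  by (metis rconst_0 rconst_1 eval_ratfun_rconst)+

lemma regular_at_qvar: "regular_at qvar z"
  unfolding qvar_def by (rule regular_at_Fract) simp

lemma eval_ratfun_qvar [simp]: "eval_ratfun qvar z = z"
  unfolding qvar_def by (simp add: eval_ratfun_Fract)

lemma
  assumes "regular_at a z" "regular_at b z"
  shows regular_at_add: "regular_at (a + b) z"
    and eval_ratfun_add: "eval_ratfun (a + b) z = eval_ratfun a z + eval_ratfun b z"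
proof -
  obtain n d where a: "a = Fract n d" "poly d z \<noteq> 0" using assms(1) by (rule regular_atE)
  obtain n' d' where b: "b = Fract n' d'" "poly d' z \<noteq> 0" using assms(2) by (rule regular_atE)
  from a b have "d \<noteq> 0" "d' \<noteq> 0" by auto
  with a b have sum: "a + b = Fract (n * d' + n' * d) (d * d')" and dd': "poly (d * d') z \<noteq> 0"
    by simp_all
  then show "regular_at (a + b) z" by (simp add: regular_at_Fract)
  show "eval_ratfun (a + b) z = eval_ratfun a z + eval_ratfun b z"
    unfolding sum using a b dd' by (simp add: eval_ratfun_Fract add_divide_distrib)
qed

lemma
  assumes "regular_at a z" "regular_at b z"
  shows regular_at_mult: "regular_at (a * b) z"
    and eval_ratfun_mult: "eval_ratfun (a * b) z = eval_ratfun a z * eval_ratfun b z"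
proof -
  obtain n d where a: "a = Fract n d" "poly d z \<noteq> 0" using assms(1) by (rule regular_atE)
  obtain n' d' where b: "b = Fract n' d'" "poly d' z \<noteq> 0" using assms(2) by (rule regular_atE)
  show "regular_at (a * b) z" using a b by (simp add: regular_at_Fract)
  show "eval_ratfun (a * b) z = eval_ratfun a z * eval_ratfun b z"
    using a b by (simp add: eval_ratfun_Fract)
qed

lemma
  assumes "regular_at a z"
  shows regular_at_uminus: "regular_at (- a) z"
    and eval_ratfun_uminus: "eval_ratfun (- a) z = - eval_ratfun a z"
proof -
  obtain n d where a: "a = Fract n d" "poly d z \<noteq> 0" using assms by (rule regular_atE)
  show "regular_at (- a) z" using a by (simp add: regular_at_Fract)
  show "eval_ratfun (- a) z = - eval_ratfun a z" using a by (simp add: eval_ratfun_Fract)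
qed

lemma
  assumes "regular_at a z" "regular_at b z"
  shows regular_at_diff: "regular_at (a - b) z"
    and eval_ratfun_diff: "eval_ratfun (a - b) z = eval_ratfun a z - eval_ratfun b z"
  using regular_at_add[OF assms(1) regular_at_uminus[OF assms(2)]]
    eval_ratfun_add[OF assms(1) regular_at_uminus[OF assms(2)]] eval_ratfun_uminus[OF assms(2)]
  by simp_all

lemma
  assumes "\<forall>i\<in>A. regular_at (g i) z"
  shows regular_at_sum: "regular_at (\<Sum>i\<in>A. g i) z"
    and eval_ratfun_sum: "eval_ratfun (\<Sum>i\<in>A. g i) z = (\<Sum>i\<in>A. eval_ratfun (g i) z)"
  using assms
  by (induction A rule: infinite_finite_induct)
    (simp_all add: regular_at_0 regular_at_add eval_ratfun_add)

lemma
  assumes "regular_at a z"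
  shows regular_at_power: "regular_at (a ^ k) z"
    and eval_ratfun_power: "eval_ratfun (a ^ k) z = eval_ratfun a z ^ k"
  using assms
  by (induction k) (simp_all add: regular_at_1 regular_at_mult eval_ratfun_mult)

lemma regular_at_inverse:
  assumes "regular_at a z" "eval_ratfun a z \<noteq> 0"
  shows "regular_at (inverse a) z"
proof -
  obtain n d where a: "a = Fract n d" "poly d z \<noteq> 0" using assms(1) by (rule regular_atE)
  with assms(2) have "poly n z \<noteq> 0" by (simp add: eval_ratfun_Fract)
  with a show ?thesis by (simp add: regular_at_Fract)
qed

lemma regular_at_of_mult_eq:
  assumes "a * b = c" "regular_at b z" "eval_ratfun b z \<noteq> 0" "regular_at c z"
  shows "regular_at a z"
proof -
  have "b \<noteq> 0" using assms(3) by auto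
  then have "a = c * inverse b" using assms(1) by (auto simp: field_simps)
  then show ?thesis using assms by (simp add: regular_at_mult regular_at_inverse)
qed

lemma
  shows regular_at_Tq: "regular_at (Tq P p I) z"
    and eval_ratfun_Tq: "eval_ratfun (Tq P p I) z = Tplus P p I - z * Tminus P p I"
  unfolding Tq_def
  by (simp_all add: regular_at_rconst regular_at_qvar regular_at_mult regular_at_diff
      eval_ratfun_diff eval_ratfun_mult)

definition Tq_expansion ::
    "'a::order set \<Rightarrow> ('a set \<Rightarrow> real) \<Rightarrow> ratfun \<Rightarrow> ('a \<Rightarrow> ratfun) \<Rightarrow> bool" where
  "Tq_expansion P f c cp \<longleftrightarrow>
     (\<forall>I\<in>order_ideals P. rconst (f I) = c + (\<Sum>p\<in>P. cp p * Tq P p I))"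

definition qweight_sum :: "'a::order set \<Rightarrow> 'a set \<Rightarrow> ('a set \<Rightarrow> ratfun) \<Rightarrow> ratfun" where
  "qweight_sum P U g = (\<Sum>I\<in>{I \<in> order_ideals P. I \<subseteq> U}. qvar ^ (card U - card I) * g I)"

lemma finite_order_ideals: "finite P \<Longrightarrow> finite (order_ideals P)"
  unfolding order_ideals_def by (rule finite_subset[of _ "Pow P"]) auto

lemma order_idealsD:
  assumes "I \<in> order_ideals P"
  shows "I \<subseteq> P" "\<And>x y. x \<in> I \<Longrightarrow> y \<in> P \<Longrightarrow> y \<le> x \<Longrightarrow> y \<in> I"
  using assms by (auto simp: order_ideals_def)

lemma insert_minimal_order_ideal:
  assumes I: "I \<in> order_ideals P" and "Tplus P r I = 1"
  shows "insert r I \<in> order_ideals P" "Tminus P r (insert r I) = 1"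
proof -
  have r: "r \<in> P - I" "\<forall>y\<in>P - I. \<not> y < r"
    using \<open>Tplus P r I = 1\<close> by (auto simp: Tplus_def split: if_splits)
  have "y \<in> insert r I" if "x \<in> insert r I" "y \<in> P" "y \<le> x" for x y
    using that r order_idealsD(2)[OF I] le_neq_trans by blast
  with r order_idealsD(1)[OF I] show "insert r I \<in> order_ideals P"
    unfolding order_ideals_def by blast
  have "\<not> r < y" if "y \<in> I" for y
    using that r order_idealsD[OF I] less_imp_le by blast
  with r show "Tminus P r (insert r I) = 1"
    by (auto simp: Tminus_def)
qed

lemma remove_maximal_order_ideal:
  assumes J: "J \<in> order_ideals P" and "Tminus P r J = 1"
  shows "J - {r} \<in> order_ideals P" "Tplus P r (J - {r}) = 1"
proof -
  have r: "r \<in> J" "\<forall>y\<in>J. \<not> r < y"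
    using \<open>Tminus P r J = 1\<close> by (auto simp: Tminus_def split: if_splits)
  have "y \<in> J - {r}" if "x \<in> J - {r}" "y \<in> P" "y \<le> x" for x y
    using that r order_idealsD(2)[OF J] le_neq_trans by blast
  with order_idealsD(1)[OF J] show "J - {r} \<in> order_ideals P"
    unfolding order_ideals_def by blast
  have "y \<in> J - {r}" if "y \<in> P" "y < r" for y
    using that r order_idealsD(2)[OF J] less_imp_le by blast
  with r order_idealsD(1)[OF J] show "Tplus P r (J - {r}) = 1"
    by (auto simp: Tplus_def)
qed

lemma Tq_eq_indicators:
  "Tq P p I = of_bool (Tplus P p I = 1) - qvar * of_bool (Tminus P p I = 1)"
  by (simp add: Tq_def Tplus_def Tminus_def)

lemma qweight_sum_Tq_eq_0:
  assumes "finite P" "U \<in> order_ideals P" "r \<in> U"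
  shows "qweight_sum P U (Tq P r) = 0"
proof -
  let ?w = "\<lambda>I. qvar ^ (card U - card I)"
  define A where "A = {I \<in> order_ideals P. I \<subseteq> U}"
  define Sp where "Sp = A \<inter> {I. Tplus P r I = 1}"
  define Sm where "Sm = A \<inter> {J. Tminus P r J = 1}"
  have "finite A" using finite_order_ideals[OF assms(1)] by (simp add: A_def)
  have "finite U" using assms(1) order_idealsD(1)[OF assms(2)] by (rule finite_subset[rotated])
  have "qweight_sum P U (Tq P r)
      = (\<Sum>I\<in>A. of_bool (Tplus P r I = 1) * ?w I)
        - qvar * (\<Sum>I\<in>A. of_bool (Tminus P r I = 1) * ?w I)"
    by (simp add: qweight_sum_def A_def Tq_eq_indicators algebra_simps sum_subtractf sum_distrib_left)
  also have "\<dots> = sum ?w Sp - qvar * sum ?w Sm"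
    using \<open>finite A\<close> by (simp add: Sp_def Sm_def)
  also have "sum ?w Sp = qvar * sum ?w Sm"
    unfolding sum_distrib_left
  proof (rule sum.reindex_bij_witness[of _ "\<lambda>J. J - {r}" "insert r"])
    fix I assume "I \<in> Sp"
    then show "insert r I - {r} = I" "insert r I \<in> Sm"
      using assms(3) insert_minimal_order_ideal[of I P r]
      by (auto simp: Sp_def Sm_def A_def Tplus_def split: if_splits)
    have "card (insert r I) = Suc (card I)" "card (insert r I) \<le> card U"
      using \<open>I \<in> Sp\<close> \<open>finite U\<close> assms(3)
      by (auto simp: Sp_def A_def Tplus_def finite_subset card_mono split: if_splits)
    then have "card U - card I = Suc (card U - card (insert r I))" by simp
    then show "qvar * ?w (insert r I) = ?w I" by simp
  next
    fix J assume "J \<in> Sm"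
    then show "insert r (J - {r}) = J" "J - {r} \<in> Sp"
      using remove_maximal_order_ideal[of J P r]
      by (auto simp: Sp_def Sm_def A_def Tminus_def split: if_splits)
  qed
  finally show ?thesis by simp
qed

lemma qweight_sum_Tq_expansion:
  assumes "finite P" "U \<in> order_ideals P" "Tq_expansion P f c cp"
  shows "qweight_sum P U (\<lambda>I. rconst (f I))
       = c * qweight_sum P U (\<lambda>_. 1) + (\<Sum>r\<in>P - U. cp r * qweight_sum P U (Tq P r))"
proof -
  let ?A = "{I \<in> order_ideals P. I \<subseteq> U}"
  let ?w = "\<lambda>I. qvar ^ (card U - card I)"
  have "qweight_sum P U (\<lambda>I. rconst (f I))
      = (\<Sum>I\<in>?A. ?w I * (c + (\<Sum>r\<in>P. cp r * Tq P r I)))"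
    using assms(3) by (simp add: qweight_sum_def Tq_expansion_def)
  also have "\<dots> = c * qweight_sum P U (\<lambda>_. 1) + (\<Sum>r\<in>P. cp r * qweight_sum P U (Tq P r))"
    by (simp add: qweight_sum_def algebra_simps sum.distrib sum_distrib_left sum.swap[of _ ?A])
  also have "(\<Sum>r\<in>P. cp r * qweight_sum P U (Tq P r))
      = (\<Sum>r\<in>P - U. cp r * qweight_sum P U (Tq P r))"
    using assms(1,2) order_idealsD(1)[OF assms(2)]
    by (intro sum.mono_neutral_right) (auto simp: qweight_sum_Tq_eq_0)
  finally show ?thesis .
qed

lemma
  assumes "\<And>I. regular_at (g I) z"
  shows regular_at_qweight_sum: "regular_at (qweight_sum P U g) z"
    and eval_ratfun_qweight_sum: "eval_ratfun (qweight_sum P U g) z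
        = (\<Sum>I\<in>{I \<in> order_ideals P. I \<subseteq> U}. z ^ (card U - card I) * eval_ratfun (g I) z)"
  unfolding qweight_sum_def using assms
  by (simp_all add: regular_at_sum eval_ratfun_sum regular_at_mult eval_ratfun_mult
      regular_at_power eval_ratfun_power regular_at_qvar)

lemma one_le_eval_ratfun_qweight_sum:
  assumes "finite P" "U \<in> order_ideals P" "z \<ge> 0"
    and "\<And>I. regular_at (g I) z" "\<And>I. eval_ratfun (g I) z \<ge> 0" "eval_ratfun (g U) z = 1"
  shows "1 \<le> eval_ratfun (qweight_sum P U g) z"
proof -
  have "finite {I \<in> order_ideals P. I \<subseteq> U}"
    using finite_order_ideals[OF assms(1)] by simp
  then have "z ^ (card U - card U) * eval_ratfun (g U) z
      \<le> (\<Sum>I\<in>{I \<in> order_ideals P. I \<subseteq> U}. z ^ (card U - card I) * eval_ratfun (g I) z)"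
    using assms by (intro member_le_sum) auto
  then show ?thesis
    using assms(4,6) by (simp add: eval_ratfun_qweight_sum)
qed

lemma Tq_above_excluded:
  assumes "I \<in> order_ideals P" "p \<in> P - I" "p \<le> r"
  shows "Tq P r I = (if r = p then rconst (Tplus P p I) else 0)"
  using assms by (auto simp: Tq_def Tplus_def Tminus_def order_ideals_def less_le)

lemma regular_at_Tq_expansion_constant:
  assumes "finite P" "Tq_expansion P f c cp" "z \<ge> 0"
  shows "regular_at c z"
proof -
  have "P \<in> order_ideals P" by (simp add: order_ideals_def)
  then have eq: "c * qweight_sum P P (\<lambda>_. 1) = qweight_sum P P (\<lambda>I. rconst (f I))"
    using qweight_sum_Tq_expansion[OF assms(1) _ assms(2)] by simp
  have "1 \<le> eval_ratfun (qweight_sum P P (\<lambda>_. 1)) z"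
    using \<open>P \<in> order_ideals P\<close> assms
    by (intro one_le_eval_ratfun_qweight_sum) (auto simp: regular_at_1)
  then show ?thesis
    by (intro regular_at_of_mult_eq[OF eq] regular_at_qweight_sum regular_at_1 regular_at_rconst) simp
qed

lemma regular_at_Tq_expansion_coeff:
  assumes "finite P" "Tq_expansion P f c cp" "z \<ge> 0" "p \<in> P"
  shows "regular_at (cp p) z"
proof -
  define U where "U = {y \<in> P. \<not> p \<le> y}"
  let ?Tplus_sum = "qweight_sum P U (\<lambda>I. rconst (Tplus P p I))"
  have U: "U \<in> order_ideals P" "p \<in> P - U"
    using assms(4) order_trans by (auto simp: U_def order_ideals_def)
  have Tq_sum: "qweight_sum P U (Tq P r) = (if r = p then ?Tplus_sum else 0)"
    if "r \<in> P - U" for r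
  proof -
    have "p \<le> r" using that by (simp add: U_def)
    then have "Tq P r I = (if r = p then rconst (Tplus P p I) else 0)"
      if "I \<in> order_ideals P" "I \<subseteq> U" for I
      using that U(2) by (intro Tq_above_excluded) auto
    then show ?thesis
      by (simp add: qweight_sum_def)
  qed
  have "(\<Sum>r\<in>P - U. cp r * qweight_sum P U (Tq P r))
      = (\<Sum>r\<in>P - U. if r = p then cp p * ?Tplus_sum else 0)"
    by (intro sum.cong) (simp_all add: Tq_sum)
  also have "\<dots> = cp p * ?Tplus_sum"
    using assms(1) U(2) by simp
  finally have eq: "cp p * ?Tplus_sum
      = qweight_sum P U (\<lambda>I. rconst (f I)) - c * qweight_sum P U (\<lambda>_. 1)"
    using qweight_sum_Tq_expansion[OF assms(1) U(1) assms(2)] by simp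
  have "regular_at c z"
    using assms(1-3) by (rule regular_at_Tq_expansion_constant)
  moreover have "1 \<le> eval_ratfun ?Tplus_sum z"
    using U assms(1,3)
    by (intro one_le_eval_ratfun_qweight_sum) (auto simp: regular_at_rconst Tplus_def U_def)
  ultimately show ?thesis
    by (intro regular_at_of_mult_eq[OF eq] regular_at_qweight_sum regular_at_diff regular_at_mult
        regular_at_rconst regular_at_1) simp_all
qed

lemma eval_ratfun_Tq_expansion:
  assumes "finite P" "Tq_expansion P f c cp" "z \<ge> 0" "I \<in> order_ideals P"
  shows "f I = eval_ratfun c z
      + (\<Sum>p\<in>P. eval_ratfun (cp p) z * (Tplus P p I - z * Tminus P p I))"
proof -
  have regular: "regular_at c z" "\<forall>p\<in>P. regular_at (cp p) z"
    using regular_at_Tq_expansion_constant[OF assms(1-3)]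
      regular_at_Tq_expansion_coeff[OF assms(1-3)]
    by simp_all
  have "rconst (f I) = c + (\<Sum>p\<in>P. cp p * Tq P p I)"
    using assms(2,4) by (simp add: Tq_expansion_def)
  then have "f I = eval_ratfun (c + (\<Sum>p\<in>P. cp p * Tq P p I)) z"
    by (metis eval_ratfun_rconst)
  also have "\<dots> = eval_ratfun c z + (\<Sum>p\<in>P. eval_ratfun (cp p) z * eval_ratfun (Tq P p I) z)"
    using regular by (simp add: regular_at_sum regular_at_mult regular_at_Tq
        eval_ratfun_add eval_ratfun_sum eval_ratfun_mult)
  finally show ?thesis
    by (simp add: eval_ratfun_Tq)
qed

theorem lemma5p6:
  fixes P :: "'a::order set" and f :: "'a set \<Rightarrow> real"
    and c :: ratfun and cp :: "'a \<Rightarrow> ratfun"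
  assumes "finite P"
    and "\<forall>I\<in>order_ideals P. rconst (f I) = c + (\<Sum>p\<in>P. cp p * Tq P p I)"
  shows "\<forall>z::real. z \<ge> 0 \<longrightarrow>
           regular_at c z \<and> (\<forall>p\<in>P. regular_at (cp p) z) \<and>
           (\<forall>I\<in>order_ideals P. f I = eval_ratfun c z
              + (\<Sum>p\<in>P. eval_ratfun (cp p) z * (Tplus P p I - z * Tminus P p I)))"
proof -
  have expansion: "Tq_expansion P f c cp"
    using assms(2) unfolding Tq_expansion_def .
  show ?thesis
    using regular_at_Tq_expansion_constant[OF assms(1) expansion]
      regular_at_Tq_expansion_coeff[OF assms(1) expansion]
      eval_ratfun_Tq_expansion[OF assms(1) expansion]
    by simp
qed

end
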